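(* Let $\mathcal U=\{1,\dots,N\}$, $\mathcal P=\{S_1,\dots,S_r\}$ with $S_i\subseteq\mathcal U$ and $\bigcup_i S_i=\mathcal U$, and let $\alpha$ be a positive integer. Define $\bar A\in\{0,*\}^{N\times N}$ with $\bar A_{ii}=*$ and all off-diagonal entries $0$, $\bar B\in\{0,*\}^{N\times1}$ with all entries $*$, and $\bar C\in\{0,*\}^{r\times N}$ with $\bar C_{ij}=*$ iff $j\in S_i$; set $\gamma=\alpha-1$. For $\bar K\in\{0,*\}^{1\times r}$ let $S(\bar K)=\{S_j:\bar K_{1j}=*\}$. Then $\bar K$ is a (feasible) solution to the Sparsest Resilient Feedback Design Problem for $(\bar A,\bar B,\bar C)$ and $\gamma$, i.e. $\bar K\in\mathcal K_\gamma$, if and only if $S(\bar K)$ is a (feasible) solution of the minimum set multi-covering problem $(\mathcal U,\mathcal P,\alpha)$, i.e. every element of $\mathcal U$ lies in at least $\alpha$ sets of $S(\bar K)$.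
   Context: A structured system $(\bar A,\bar B,\bar C)$ has $\bar A\in\{0,*\}^{n\times n}$, $\bar B\in\{0,*\}^{n\times m}$, $\bar C\in\{0,*\}^{p\times n}$; a numerical realization is real $(A,B,C)$ vanishing wherever the structured matrix is $0$. For $\bar K\in\{0,*\}^{m\times p}$, $[\bar K]=\{K\in\mathbb R^{m\times p}:K_{ij}=0\text{ whenever }\bar K_{ij}=0\}$; $(\bar A,\bar B,\bar C,\bar K)$ has no structurally fixed modes (no SFMs) if some realization satisfies $\bigcap_{K\in[\bar K]}\sigma(A+BKC)=\emptyset$. $\bar K^{\mathcal I}$ is $\bar K$ with entries indexed by $\mathcal I$ set to $0$. $\mathcal K_\gamma=\{\bar K:(\bar A,\bar B,\bar C,\bar K^{\mathcal I})\text{ has no SFMs for all }|\mathcal I|\le\gamma\}$. Sparsest Resilient Feedback Design Problem: minimize the number of $*$ entries $\|\bar K\|_0$ over $\bar K\in\mathcal K_\gamma$. Minimum set multi-covering (MSMC) problem $(\mathcal U,\mathcal P,\alpha)$: find a minimum-cardinality subcollection of $\mathcal P$ covering each element of $\mathcal U$ at least $\alpha$ times. *)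

theory Defs
  imports Complex_Main "Jordan_Normal_Form.Char_Poly"
begin

(* Structured matrices: bool mat, True = *, False = 0. *)

definition realizes :: "bool mat \<Rightarrow> real mat \<Rightarrow> bool" where
  "realizes Mb M \<longleftrightarrow> dim_row M = dim_row Mb \<and> dim_col M = dim_col Mb \<and>
     (\<forall>i<dim_row Mb. \<forall>j<dim_col Mb. \<not> Mb $$ (i,j) \<longrightarrow> M $$ (i,j) = 0)"

definition pattern_set :: "bool mat \<Rightarrow> real mat set" where
  "pattern_set Kb = {K. realizes Kb K}"

definition spec :: "real mat \<Rightarrow> complex set" where
  "spec M = {z. eigenvalue (map_mat complex_of_real M) z}"

definition no_SFM :: "bool mat \<Rightarrow> bool mat \<Rightarrow> bool mat \<Rightarrow> bool mat \<Rightarrow> bool" where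
  "no_SFM Ab Bb Cb Kb \<longleftrightarrow>
     (\<exists>A B C. realizes Ab A \<and> realizes Bb B \<and> realizes Cb C \<and>
        (\<Inter>K\<in>pattern_set Kb. spec (A + B * K * C)) = {})"

definition zero_entries :: "bool mat \<Rightarrow> (nat \<times> nat) set \<Rightarrow> bool mat" where
  "zero_entries Kb I = mat (dim_row Kb) (dim_col Kb) (\<lambda>(i,j). Kb $$ (i,j) \<and> (i,j) \<notin> I)"

(* K_gamma for (Ab, Bb, Cb): Ab n x n, Bb n x m, Cb p x n, Kbar m x p *)
definition K_gamma :: "bool mat \<Rightarrow> bool mat \<Rightarrow> bool mat \<Rightarrow> nat \<Rightarrow> bool mat set" where
  "K_gamma Ab Bb Cb \<gamma> = {Kb. Kb \<in> carrier_mat (dim_col Bb) (dim_row Cb) \<and>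
     (\<forall>I. I \<subseteq> {0..<dim_col Bb} \<times> {0..<dim_row Cb} \<and> card I \<le> \<gamma> \<longrightarrow>
          no_SFM Ab Bb Cb (zero_entries Kb I))}"

(* The reduction matrices; U = {0..<N}, sets S 0 .. S (r-1) *)
definition red_A :: "nat \<Rightarrow> bool mat" where
  "red_A N = mat N N (\<lambda>(i,j). i = j)"
definition red_B :: "nat \<Rightarrow> bool mat" where
  "red_B N = mat N 1 (\<lambda>_. True)"
definition red_C :: "nat \<Rightarrow> nat \<Rightarrow> (nat \<Rightarrow> nat set) \<Rightarrow> bool mat" where
  "red_C N r S = mat r N (\<lambda>(i,j). j \<in> S i)"

(* the selected subcollection S(Kbar), counted with index multiplicity, covers
   every element of U at least alpha times *)
definition multi_covers :: "nat \<Rightarrow> nat \<Rightarrow> (nat \<Rightarrow> nat set) \<Rightarrow> nat \<Rightarrow> bool mat \<Rightarrow> bool" where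
  "multi_covers N r S \<alpha> Kb \<longleftrightarrow>
     (\<forall>u<N. card {j. j < r \<and> Kb $$ (0,j) \<and> u \<in> S j} \<ge> \<alpha>)"

end

(* With a single input, the closed-loop matrix A + B K C adds the same row K C, scaled by the
   entries of B, to every row of A.  If an element u lies in no selected set, column u of K C
   vanishes, so column u of A + B K C is A_uu e_u and A_uu is a fixed mode of every realization.
   If every element is covered, take A = diag(0, ..., N-1), B = 1 and C the 0/1 incidence matrix:
   the gain 0 has spectrum {0, ..., N-1}, while for the gain selecting each chosen set with weight 1
   an eigenvalue u forces the eigenvector onto e_u, hence forces the number of selected sets
   containing u to be 0.  So "no structurally fixed modes" means "covering", and deleting any
   alpha - 1 entries of K preserves a covering iff every element is covered at least alpha times. *)

theory Submission
  imports Defs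
begin

lemma eigenvalue_if_unit_column:
  fixes M :: "'a::comm_ring_1 mat"
  assumes M: "M \<in> carrier_mat n n" and u: "u < n"
    and col: "\<And>k. k < n \<Longrightarrow> M $$ (k,u) = (if k = u then a else 0)"
  shows "eigenvalue M a"
proof -
  have "M *\<^sub>v unit_vec n u = a \<cdot>\<^sub>v unit_vec n u"
  proof (rule eq_vecI)
    fix k assume "k < dim_vec (a \<cdot>\<^sub>v unit_vec n u)"
    then have k: "k < n" by simp
    have "(M *\<^sub>v unit_vec n u) $ k = M $$ (k,u)"
      using M k u by (simp add: scalar_prod_def if_distrib cong: if_cong)
    then show "(M *\<^sub>v unit_vec n u) $ k = (a \<cdot>\<^sub>v unit_vec n u) $ k"
      using col[OF k] k u by simp
  qed (use M in simp)
  then have "eigenvector M (unit_vec n u) a"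
    unfolding eigenvector_def using M unit_vec_nonzero[OF u] by simp
  then show ?thesis unfolding eigenvalue_def by blast
qed

lemma spec_obtain_eigenvector:
  assumes M: "M \<in> carrier_mat n n" and l: "l \<in> spec M"
  obtains w :: "nat \<Rightarrow> complex" where "\<exists>u<n. w u \<noteq> 0"
    and "\<And>k. k < n \<Longrightarrow> (\<Sum>j<n. complex_of_real (M $$ (k,j)) * w j) = l * w k"
proof -
  let ?M = "map_mat complex_of_real M"
  obtain v where v: "v \<in> carrier_vec n" "v \<noteq> 0\<^sub>v n" "?M *\<^sub>v v = l \<cdot>\<^sub>v v"
    using l M unfolding spec_def eigenvalue_def eigenvector_def by auto
  have "\<exists>u<n. v $ u \<noteq> 0"
  proof (rule ccontr)
    assume "\<not> ?thesis"
    then have "v = 0\<^sub>v n" using v(1) by (intro eq_vecI) auto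
    with v(2) show False by simp
  qed
  moreover have "(\<Sum>j<n. complex_of_real (M $$ (k,j)) * v $ j) = l * v $ k" if k: "k < n" for k
  proof -
    have "(?M *\<^sub>v v) $ k = (l \<cdot>\<^sub>v v) $ k" using v(3) by simp
    then show ?thesis using M v(1) k by (simp add: scalar_prod_def lessThan_atLeast0)
  qed
  ultimately show thesis using that[of "\<lambda>j. v $ j"] by blast
qed

text \<open>The hypothesis \<open>entries\<close> below describes \<open>diag d + \<one> c\<^sup>T\<close>: the same row \<open>c\<close> added to
  every row of a diagonal matrix, the shape of a single-input closed loop.\<close>

lemma spec_diag_plus_common_row_obtain:
  assumes M: "M \<in> carrier_mat n n" and l: "l \<in> spec M"
    and entries: "\<And>k j. k < n \<Longrightarrow> j < n \<Longrightarrow> M $$ (k,j) = (if k = j then d k else 0) + c j"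
  obtains w :: "nat \<Rightarrow> complex" where "\<exists>u<n. w u \<noteq> 0"
    and "\<And>k. k < n \<Longrightarrow> of_real (d k) * w k + (\<Sum>j<n. of_real (c j) * w j) = l * w k"
proof -
  obtain w where w: "\<exists>u<n. w u \<noteq> 0"
    "\<And>k. k < n \<Longrightarrow> (\<Sum>j<n. complex_of_real (M $$ (k,j)) * w j) = l * w k"
    using spec_obtain_eigenvector[OF M l] by blast
  have "of_real (d k) * w k + (\<Sum>j<n. of_real (c j) * w j) = l * w k" if k: "k < n" for k
  proof -
    have "(\<Sum>j<n. complex_of_real (M $$ (k,j)) * w j)
        = (\<Sum>j<n. (if k = j then of_real (d k) * w j else 0) + of_real (c j) * w j)"
      by (rule sum.cong) (use k in \<open>auto simp: entries algebra_simps\<close>)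
    also have "\<dots> = of_real (d k) * w k + (\<Sum>j<n. of_real (c j) * w j)"
      using k by (simp add: sum.distrib)
    finally show ?thesis using w(2)[OF k] by simp
  qed
  with w(1) show thesis using that by blast
qed

lemma spec_diagonal:
  assumes M: "M \<in> carrier_mat n n" and l: "l \<in> spec M"
    and entries: "\<And>k j. k < n \<Longrightarrow> j < n \<Longrightarrow> M $$ (k,j) = (if k = j then d k else 0)"
  shows "\<exists>u<n. l = of_real (d u)"
proof -
  obtain w where w: "\<exists>u<n. w u \<noteq> 0"
    "\<And>k. k < n \<Longrightarrow> of_real (d k) * w k + (\<Sum>j<n. of_real 0 * w j) = l * w k"
    using spec_diag_plus_common_row_obtain[OF M l, of d "\<lambda>_. 0"] entries by auto
  then obtain u where "u < n" "w u \<noteq> 0" "of_real (d u) * w u = l * w u" by auto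
  then show ?thesis by auto
qed

text \<open>Since \<open>d\<close> is injective, an eigenvector for \<open>d u\<close> is forced onto \<open>e\<^sub>u\<close>.\<close>

lemma diag_entry_not_in_spec_diag_plus_common_row:
  assumes M: "M \<in> carrier_mat n n"
    and entries: "\<And>k j. k < n \<Longrightarrow> j < n \<Longrightarrow> M $$ (k,j) = (if k = j then d k else 0) + c j"
    and d: "inj_on d {..<n}" and u: "u < n" and cu: "c u \<noteq> 0"
  shows "of_real (d u) \<notin> spec M"
proof
  assume "of_real (d u) \<in> spec M"
  then obtain w :: "nat \<Rightarrow> complex" where w: "\<exists>u<n. w u \<noteq> 0"
    "\<And>k. k < n \<Longrightarrow> of_real (d k) * w k + (\<Sum>j<n. of_real (c j) * w j) = of_real (d u) * w k"
    using spec_diag_plus_common_row_obtain[OF M _ entries] by blast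
  define s where "s = (\<Sum>j<n. complex_of_real (c j) * w j)"
  have s0: "s = 0" using w(2)[OF u] unfolding s_def by simp
  have w0: "w k = 0" if "k < n" "k \<noteq> u" for k
  proof -
    have "d k \<noteq> d u" using inj_onD[OF d, of k u] that u by auto
    then have "of_real (d k) \<noteq> (of_real (d u) :: complex)" by simp
    then show ?thesis using w(2)[OF that(1)] s0 unfolding s_def by simp
  qed
  then have "w u \<noteq> 0" using w(1) by blast
  moreover have "s = of_real (c u) * w u"
    unfolding s_def using u w0 by (subst sum.remove[of _ u]) auto
  ultimately show False using s0 cu by simp
qed

lemma index_col_row_mult_mat:
  fixes B K C :: "'a::comm_ring_1 mat"
  assumes "B \<in> carrier_mat n 1" "K \<in> carrier_mat 1 r" "C \<in> carrier_mat r n" "i < n" "j < n"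
  shows "(B * K * C) $$ (i,j) = B $$ (i,0) * (\<Sum>m<r. K $$ (0,m) * C $$ (m,j))"
proof -
  have "(B * K) $$ (i,m) = B $$ (i,0) * K $$ (0,m)" if "m < r" for m
    using assms that by (simp add: scalar_prod_def)
  then show ?thesis using assms
    by (simp add: scalar_prod_def sum_distrib_left lessThan_atLeast0 mult.assoc)
qed

lemma realizes_carrier: "realizes Mb M \<Longrightarrow> Mb \<in> carrier_mat n m \<Longrightarrow> M \<in> carrier_mat n m"
  unfolding realizes_def by auto

lemma realizes_zero:
  "realizes Mb M \<Longrightarrow> i < dim_row Mb \<Longrightarrow> j < dim_col Mb \<Longrightarrow> \<not> Mb $$ (i,j) \<Longrightarrow> M $$ (i,j) = 0"
  unfolding realizes_def by auto

lemma red_A_simps [simp]: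
  "dim_row (red_A N) = N" "dim_col (red_A N) = N" "i < N \<Longrightarrow> j < N \<Longrightarrow> red_A N $$ (i,j) = (i = j)"
  unfolding red_A_def by auto

lemma red_B_simps [simp]:
  "dim_row (red_B N) = N" "dim_col (red_B N) = 1" "i < N \<Longrightarrow> j < 1 \<Longrightarrow> red_B N $$ (i,j)"
  unfolding red_B_def by auto

lemma red_C_simps [simp]:
  "dim_row (red_C N r S) = r" "dim_col (red_C N r S) = N"
  "i < r \<Longrightarrow> j < N \<Longrightarrow> red_C N r S $$ (i,j) = (j \<in> S i)"
  unfolding red_C_def by auto

lemma uncovered_element_fixed_mode:
  assumes Kb: "Kb \<in> carrier_mat 1 r" and u: "u < N"
    and uncovered: "\<not> (\<exists>j<r. Kb $$ (0,j) \<and> u \<in> S j)"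
    and rA: "realizes (red_A N) A" and rB: "realizes (red_B N) B" and rC: "realizes (red_C N r S) C"
    and K: "K \<in> pattern_set Kb"
  shows "complex_of_real (A $$ (u,u)) \<in> spec (A + B * K * C)"
proof -
  have A: "A \<in> carrier_mat N N" and B: "B \<in> carrier_mat N 1" and C: "C \<in> carrier_mat r N"
    using rA rB rC unfolding realizes_def carrier_mat_def by auto
  have rK: "realizes Kb K" using K unfolding pattern_set_def by simp
  have Kc: "K \<in> carrier_mat 1 r" using realizes_carrier[OF rK Kb] .
  have "K $$ (0,m) * C $$ (m,u) = 0" if m: "m < r" for m
  proof (cases "Kb $$ (0,m)")
    case True
    then have "u \<notin> S m" using uncovered m by auto
    then show ?thesis using realizes_zero[OF rC, of m u] m u by simp
  next
    case False
    moreover have "dim_row Kb = 1" "dim_col Kb = r" using Kb by auto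
    ultimately show ?thesis using realizes_zero[OF rK, of 0 m] m by simp
  qed
  then have "(\<Sum>m<r. K $$ (0,m) * C $$ (m,u)) = 0" by (intro sum.neutral) simp
  then have BKC: "(B * K * C) $$ (k,u) = 0" if "k < N" for k
    unfolding index_col_row_mult_mat[OF B Kc C that u] by simp
  have M: "A + B * K * C \<in> carrier_mat N N" using A B Kc C by auto
  have col: "map_mat complex_of_real (A + B * K * C) $$ (k,u)
      = (if k = u then complex_of_real (A $$ (u,u)) else 0)" if k: "k < N" for k
  proof -
    have "(A + B * K * C) $$ (k,u) = A $$ (k,u) + (B * K * C) $$ (k,u)"
      using B Kc C k u by (intro index_add_mat(1)) auto
    moreover have "A $$ (k,u) = 0" if "k \<noteq> u"
      using realizes_zero[OF rA, of k u] k u that by simp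
    ultimately have "(A + B * K * C) $$ (k,u) = (if k = u then A $$ (u,u) else 0)"
      using BKC[OF k] by auto
    moreover have "dim_row (A + B * K * C) = N" "dim_col (A + B * K * C) = N" using M by auto
    ultimately show ?thesis using k u by simp
  qed
  have "eigenvalue (map_mat complex_of_real (A + B * K * C)) (complex_of_real (A $$ (u,u)))"
    by (rule eigenvalue_if_unit_column[OF _ u col]) (use M in simp)
  then show ?thesis unfolding spec_def by simp
qed

definition generic_A :: "nat \<Rightarrow> real mat" where
  "generic_A N = mat N N (\<lambda>(i,j). if i = j then real i else 0)"

definition generic_B :: "nat \<Rightarrow> real mat" where
  "generic_B N = mat N 1 (\<lambda>_. 1)"

definition generic_C :: "nat \<Rightarrow> nat \<Rightarrow> (nat \<Rightarrow> nat set) \<Rightarrow> real mat" where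
  "generic_C N r S = mat r N (\<lambda>(i,j). if j \<in> S i then 1 else 0)"

lemma generic_carrier:
  "generic_A N \<in> carrier_mat N N" "generic_B N \<in> carrier_mat N 1" "generic_C N r S \<in> carrier_mat r N"
  unfolding generic_A_def generic_B_def generic_C_def by auto

lemma realizes_generic:
  "realizes (red_A N) (generic_A N)" "realizes (red_B N) (generic_B N)"
  "realizes (red_C N r S) (generic_C N r S)"
  unfolding realizes_def red_A_def red_B_def red_C_def generic_A_def generic_B_def generic_C_def
  by auto

lemma index_generic_closed_loop:
  assumes K: "K \<in> carrier_mat 1 r" and k: "k < N" and j: "j < N"
  shows "(generic_A N + generic_B N * K * generic_C N r S) $$ (k,j) =
     (if k = j then real k else 0) + (\<Sum>m<r. K $$ (0,m) * (if j \<in> S m then 1 else 0))"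
proof -
  have "generic_B N * K * generic_C N r S \<in> carrier_mat N N"
    using generic_carrier(2,3) K by (intro mult_carrier_mat)
  then have "(generic_A N + generic_B N * K * generic_C N r S) $$ (k,j)
      = generic_A N $$ (k,j) + (generic_B N * K * generic_C N r S) $$ (k,j)"
    using generic_carrier k j by (simp del: index_mult_mat assoc_mult_mat)
  then show ?thesis
    unfolding index_col_row_mult_mat[OF generic_carrier(2) K generic_carrier(3) k j]
    using k j by (simp add: generic_A_def generic_B_def generic_C_def)
qed

lemma covering_no_SFM:
  assumes Kb: "Kb \<in> carrier_mat 1 r"
    and covering: "\<forall>u<N. \<exists>j<r. Kb $$ (0,j) \<and> u \<in> S j"
  shows "no_SFM (red_A N) (red_B N) (red_C N r S) Kb"
proof -
  let ?M = "\<lambda>K. generic_A N + generic_B N * K * generic_C N r S"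
  have M: "?M K \<in> carrier_mat N N" if "K \<in> carrier_mat 1 r" for K
    using generic_carrier that by (intro add_carrier_mat mult_carrier_mat)
  define K0 :: "real mat" where "K0 = 0\<^sub>m 1 r"
  define K1 :: "real mat" where "K1 = mat 1 r (\<lambda>(i,j). if Kb $$ (0,j) then 1 else 0)"
  have K0: "K0 \<in> carrier_mat 1 r" "K0 \<in> pattern_set Kb"
    using Kb unfolding K0_def pattern_set_def realizes_def by auto
  have K1: "K1 \<in> carrier_mat 1 r" "K1 \<in> pattern_set Kb"
    using Kb unfolding K1_def pattern_set_def realizes_def by auto
  define c where "c j = (\<Sum>m<r. K1 $$ (0,m) * (if j \<in> S m then 1 else 0 :: real))" for j
  have "spec (?M K0) \<inter> spec (?M K1) = {}"
  proof (intro equals0I, elim IntE)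
    fix l assume l0: "l \<in> spec (?M K0)" and l1: "l \<in> spec (?M K1)"
    have "?M K0 $$ (k,j) = (if k = j then real k else 0)" if "k < N" "j < N" for k j
      using index_generic_closed_loop[OF K0(1) that] by (simp add: K0_def)
    then have "\<exists>u<N. l = of_real (real u)" by (rule spec_diagonal[OF M[OF K0(1)] l0])
    then obtain u where u: "u < N" and lu: "l = of_real (real u)" by blast
    obtain j where j: "j < r" "Kb $$ (0,j)" "u \<in> S j" using covering u by blast
    have "c u \<noteq> 0"
      unfolding c_def using j by (intro sum_pos2[THEN less_imp_neq, symmetric]) (auto simp: K1_def)
    then have "of_real (real u) \<notin> spec (?M K1)"
      by (intro diag_entry_not_in_spec_diag_plus_common_row[OF M[OF K1(1)] _ _ u])
        (auto simp: index_generic_closed_loop[OF K1(1)] c_def inj_on_def)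
    with l1 lu show False by simp
  qed
  then have "(\<Inter>K\<in>pattern_set Kb. spec (?M K)) = {}" using K0(2) K1(2) by blast
  then show ?thesis unfolding no_SFM_def using realizes_generic by blast
qed

lemma no_SFM_red_iff_covering:
  assumes "Kb \<in> carrier_mat 1 r"
  shows "no_SFM (red_A N) (red_B N) (red_C N r S) Kb \<longleftrightarrow> (\<forall>u<N. \<exists>j<r. Kb $$ (0,j) \<and> u \<in> S j)"
proof
  assume "no_SFM (red_A N) (red_B N) (red_C N r S) Kb"
  then obtain A B C where "realizes (red_A N) A" "realizes (red_B N) B" "realizes (red_C N r S) C"
    and "(\<Inter>K\<in>pattern_set Kb. spec (A + B * K * C)) = {}"
    unfolding no_SFM_def by blast
  then show "\<forall>u<N. \<exists>j<r. Kb $$ (0,j) \<and> u \<in> S j"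
    using uncovered_element_fixed_mode[OF assms] by blast
qed (rule covering_no_SFM[OF assms])

lemma zero_entries_carrier: "zero_entries Kb I \<in> carrier_mat (dim_row Kb) (dim_col Kb)"
  unfolding zero_entries_def by simp

lemma index_zero_entries:
  "i < dim_row Kb \<Longrightarrow> j < dim_col Kb \<Longrightarrow> zero_entries Kb I $$ (i,j) = (Kb $$ (i,j) \<and> (i,j) \<notin> I)"
  unfolding zero_entries_def by simp

lemma all_small_subsets_miss_iff:
  assumes X: "finite X" and T: "T \<subseteq> X"
  shows "(\<forall>I. I \<subseteq> X \<and> card I \<le> k \<longrightarrow> \<not> T \<subseteq> I) \<longleftrightarrow> k < card T"
proof
  assume "\<forall>I. I \<subseteq> X \<and> card I \<le> k \<longrightarrow> \<not> T \<subseteq> I"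
  then have "\<not> card T \<le> k" using T by blast
  then show "k < card T" by simp
next
  assume k: "k < card T"
  show "\<forall>I. I \<subseteq> X \<and> card I \<le> k \<longrightarrow> \<not> T \<subseteq> I"
  proof (intro allI impI notI, elim conjE)
    fix I assume "I \<subseteq> X" "card I \<le> k" "T \<subseteq> I"
    then have "card T \<le> card I" using X by (intro card_mono) (auto intro: finite_subset)
    with k \<open>card I \<le> k\<close> show False by simp
  qed
qed

lemma no_SFM_red_zero_entries_iff:
  assumes Kb: "Kb \<in> carrier_mat 1 r"
  shows "no_SFM (red_A N) (red_B N) (red_C N r S) (zero_entries Kb I) \<longleftrightarrow>
    (\<forall>u<N. \<not> Pair 0 ` {j. j < r \<and> Kb $$ (0,j) \<and> u \<in> S j} \<subseteq> I)"
proof -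
  have "zero_entries Kb I \<in> carrier_mat 1 r" using zero_entries_carrier[of Kb I] Kb by simp
  then have "no_SFM (red_A N) (red_B N) (red_C N r S) (zero_entries Kb I) \<longleftrightarrow>
      (\<forall>u<N. \<exists>j<r. zero_entries Kb I $$ (0,j) \<and> u \<in> S j)"
    by (rule no_SFM_red_iff_covering)
  also have "\<dots> \<longleftrightarrow> (\<forall>u<N. \<exists>j<r. Kb $$ (0,j) \<and> (0,j) \<notin> I \<and> u \<in> S j)"
    using Kb by (simp add: index_zero_entries cong: conj_cong)
  also have "\<dots> \<longleftrightarrow> (\<forall>u<N. \<not> Pair 0 ` {j. j < r \<and> Kb $$ (0,j) \<and> u \<in> S j} \<subseteq> I)"
    by auto
  finally show ?thesis .
qed

theorem lemma3:
  fixes N r \<alpha> :: nat and S :: "nat \<Rightarrow> nat set" and Kb :: "bool mat"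
  assumes "\<forall>i<r. S i \<subseteq> {0..<N}"
    and "(\<Union>i<r. S i) = {0..<N}"
    and "\<alpha> \<ge> 1"
    and "Kb \<in> carrier_mat 1 r"
  shows "Kb \<in> K_gamma (red_A N) (red_B N) (red_C N r S) (\<alpha> - 1)
     \<longleftrightarrow> multi_covers N r S \<alpha> Kb"
proof -
  define T where "T u = Pair (0::nat) ` {j. j < r \<and> Kb $$ (0,j) \<and> u \<in> S j}" for u
  let ?X = "{0..<1} \<times> {0..<r}"
  have miss_iff: "(\<forall>I. I \<subseteq> ?X \<and> card I \<le> \<alpha> - 1 \<longrightarrow> \<not> T u \<subseteq> I) \<longleftrightarrow> \<alpha> - 1 < card (T u)"
    for u by (rule all_small_subsets_miss_iff) (auto simp: T_def)
  have threshold: "\<alpha> - 1 < c \<longleftrightarrow> \<alpha> \<le> c" for c using assms(3) by arith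
  have "Kb \<in> K_gamma (red_A N) (red_B N) (red_C N r S) (\<alpha> - 1) \<longleftrightarrow>
      (\<forall>I. I \<subseteq> ?X \<and> card I \<le> \<alpha> - 1 \<longrightarrow> no_SFM (red_A N) (red_B N) (red_C N r S) (zero_entries Kb I))"
    unfolding K_gamma_def using assms(4) by simp
  also have "\<dots> \<longleftrightarrow> (\<forall>u<N. \<forall>I. I \<subseteq> ?X \<and> card I \<le> \<alpha> - 1 \<longrightarrow> \<not> T u \<subseteq> I)"
    unfolding no_SFM_red_zero_entries_iff[OF assms(4)] T_def by blast
  also have "\<dots> \<longleftrightarrow> (\<forall>u<N. \<alpha> \<le> card {j. j < r \<and> Kb $$ (0,j) \<and> u \<in> S j})"
    unfolding miss_iff threshold unfolding T_def by (simp add: card_image inj_on_def)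
  also have "\<dots> \<longleftrightarrow> multi_covers N r S \<alpha> Kb"
    unfolding multi_covers_def ..
  finally show ?thesis .
qed

end
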